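(* Let $(C,\Delta_C,\varepsilon)$ be a coalgebra over a commutative field $K$ satisfying: (1) there exists $e\in C\setminus\{0\}$ with $\Delta_C(e)=e\otimes e$; (2) setting $\mathrm{Prim}(C)=\{x\in C:\Delta_C(x)=x\otimes e+e\otimes x\}$, there exists a linear map $L:\mathrm{Prim}(C)\to\mathcal L(C)$, $p\mapsto L_p$, such that (a) $L_p(e)=p$ for all $p\in\mathrm{Prim}(C)$, and (b) $\Delta_C(L_p(x))=L_p(x)\otimes e+(\mathrm{Id}\otimes L_p)\circ\Delta_C(x)$ for all $x\in C$; (3) setting $\tilde\Delta_C(x)=\Delta_C(x)-x\otimes e-e\otimes x$, $\tilde\Delta_C^1=\tilde\Delta_C$ and $\tilde\Delta_C^n=(\tilde\Delta_C^{n-1}\otimes\mathrm{Id})\circ\tilde\Delta_C$, for every $x\in\ker(\varepsilon)$ there exists $n\ge1$ with $\tilde\Delta_C^n(x)=0$. Then $C$ is isomorphic (as a coalgebra) to the tensor coalgebra $T(\mathrm{Prim}(C))$.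
   Context: For a vector space $V$ over $K$, the tensor coalgebra $T(V)=\bigoplus_{n\ge0}V^{\otimes n}$ has coproduct $\Delta(v_1\top\cdots\top v_n)=\sum_{k=0}^n(v_1\top\cdots\top v_k)\otimes(v_{k+1}\top\cdots\top v_n)$, where $v_1\top\cdots\top v_n$ denotes the tensor $v_1\otimes\cdots\otimes v_n\in V^{\otimes n}$ and the empty tensor is $1\in V^{\otimes0}=K$; its counit sends $1$ to $1$ and $V^{\otimes n}$ to $0$ for $n\ge1$. $\mathcal L(C)$ denotes the space of linear endomorphisms of $C$. *)

theory Defs
  imports Main "HOL.Vector_Spaces"
begin

text \<open>Tensors are represented dually: an element of V1 (x) ... (x) Vn (subspaces of C) is
 represented by the multilinear function it induces on n-tuples (lists) of linear functionals
 on C, made canonical by being 0 on every list that is not a list of n linear functionals.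
 Over a field this representation is faithful (injective).\<close>

definition lin_fun :: "('k::field \<Rightarrow> 'c::ab_group_add \<Rightarrow> 'c) \<Rightarrow> ('c \<Rightarrow> 'k) \<Rightarrow> bool" where
  "lin_fun scale f \<longleftrightarrow> Vector_Spaces.linear scale (*) f"

definition lin_list :: "('k::field \<Rightarrow> 'c::ab_group_add \<Rightarrow> 'c) \<Rightarrow> nat \<Rightarrow> ('c \<Rightarrow> 'k) list \<Rightarrow> bool" where
  "lin_list scale n fs \<longleftrightarrow> length fs = n \<and> (\<forall>f\<in>set fs. lin_fun scale f)"

definition ptens :: "('k::field \<Rightarrow> 'c::ab_group_add \<Rightarrow> 'c) \<Rightarrow> 'c list \<Rightarrow> ('c \<Rightarrow> 'k) list \<Rightarrow> 'k" where
  "ptens scale vs fs = (if lin_list scale (length vs) fs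
      then (\<Prod>i<length vs. (fs ! i) (vs ! i)) else 0)"

definition tensors :: "('k::field \<Rightarrow> 'c::ab_group_add \<Rightarrow> 'c) \<Rightarrow> 'c set \<Rightarrow> nat \<Rightarrow> (('c \<Rightarrow> 'k) list \<Rightarrow> 'k) set" where
  "tensors scale V n = {(\<lambda>fs. \<Sum>j<m. (c::nat \<Rightarrow> 'k) j * ptens scale ((vs::nat \<Rightarrow> 'c list) j) fs) | m c vs.
      \<forall>j<m. length (vs j) = n \<and> set (vs j) \<subseteq> V}"

definition coalgebra :: "('k::field \<Rightarrow> 'c::ab_group_add \<Rightarrow> 'c) \<Rightarrow> ('c \<Rightarrow> ('c \<Rightarrow> 'k) list \<Rightarrow> 'k)
    \<Rightarrow> ('c \<Rightarrow> 'k) \<Rightarrow> bool" where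
  "coalgebra scale \<Delta> \<epsilon> \<longleftrightarrow>
     vector_space scale \<and>
     (\<forall>x. \<Delta> x \<in> tensors scale UNIV 2) \<and>
     (\<forall>x y fs. \<Delta> (x + y) fs = \<Delta> x fs + \<Delta> y fs) \<and>
     (\<forall>a x fs. \<Delta> (scale a x) fs = a * \<Delta> x fs) \<and>
     lin_fun scale \<epsilon> \<and>
     (\<forall>x f g h. lin_fun scale f \<and> lin_fun scale g \<and> lin_fun scale h \<longrightarrow>
        \<Delta> x [(\<lambda>a. \<Delta> a [f, g]), h] = \<Delta> x [f, (\<lambda>b. \<Delta> b [g, h])]) \<and>
     (\<forall>x f. lin_fun scale f \<longrightarrow> \<Delta> x [\<epsilon>, f] = f x \<and> \<Delta> x [f, \<epsilon>] = f x)"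

definition prim :: "('k::field \<Rightarrow> 'c::ab_group_add \<Rightarrow> 'c) \<Rightarrow> ('c \<Rightarrow> ('c \<Rightarrow> 'k) list \<Rightarrow> 'k) \<Rightarrow> 'c \<Rightarrow> 'c set" where
  "prim scale \<Delta> e = {x. \<forall>fs. \<Delta> x fs = ptens scale [x, e] fs + ptens scale [e, x] fs}"

definition dtil :: "('c::ab_group_add \<Rightarrow> ('c \<Rightarrow> 'k::field) list \<Rightarrow> 'k) \<Rightarrow> 'c \<Rightarrow> 'c \<Rightarrow> ('c \<Rightarrow> 'k) \<Rightarrow> ('c \<Rightarrow> 'k) \<Rightarrow> 'k" where
  "dtil \<Delta> e x f g = \<Delta> x [f, g] - f x * g e - f e * g x"

text \<open>dtil_iter n = reduced coproduct iterated (n+1) times, i.e. tilde-Delta^(n+1),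
  evaluated on n+2 functionals: tilde-Delta^(n+1) = (tilde-Delta^n (x) Id) o tilde-Delta\<close>
fun dtil_iter :: "('c::ab_group_add \<Rightarrow> ('c \<Rightarrow> 'k::field) list \<Rightarrow> 'k) \<Rightarrow> 'c \<Rightarrow> nat \<Rightarrow> 'c \<Rightarrow> ('c \<Rightarrow> 'k) list \<Rightarrow> 'k" where
  "dtil_iter \<Delta> e 0 x fs = dtil \<Delta> e x (fs ! 0) (fs ! 1)"
| "dtil_iter \<Delta> e (Suc n) x fs = dtil \<Delta> e x (\<lambda>a. dtil_iter \<Delta> e n a (butlast fs)) (last fs)"

end

(*
  Choose a linear projection pi of C onto Prim(C) with pi(e) = 0 and send x to the family of its
  components (pi (x) ... (x) pi)(Delta^(n) x); coassociativity makes this a coalgebra map into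
  T(Prim C).  It is injective: if all components of x vanish then eps(x) = 0, and by conilpotency
  the n-fold coproduct of x paired with functionals vanishing at e is zero for large n.  Going down
  in n, a slot vector of such a pairing has vanishing reduced coproduct, so it is primitive up to
  a multiple of e, and replacing a functional h by h o pi does not change the pairing; hence the
  pairing equals a component of x and vanishes as well.  In degree 1 this gives x = 0.  It is
  surjective: L_pn (... (L_p1 e)) has degree-n component p1 (x) ... (x) pn and no components of
  higher degree, so T(Prim C) is reached by induction on the degree.
*)

theory Submission
  imports Defs
begin

lemma vector_space_field: "vector_space ((*) :: 'k::field \<Rightarrow> 'k \<Rightarrow> 'k)"
  by unfold_locales (auto simp: algebra_simps)

lemma lin_fun_module_hom: "lin_fun scale f \<Longrightarrow> module_hom scale (*) f"
  unfolding lin_fun_def by (simp add: module_hom_iff_linear)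

lemma lin_fun_add: "lin_fun scale f \<Longrightarrow> f (x + y) = f x + f y"
  and lin_fun_scale: "lin_fun scale f \<Longrightarrow> f (scale c x) = c * f x"
  and lin_fun_zero: "lin_fun scale f \<Longrightarrow> f 0 = 0"
  and lin_fun_diff: "lin_fun scale f \<Longrightarrow> f (x - y) = f x - f y"
  using module_hom.add module_hom.scale module_hom.zero module_hom.diff
  by (blast dest: lin_fun_module_hom)+

lemma lin_funI:
  assumes "vector_space scale" "\<And>x y. f (x + y) = f x + f y" "\<And>c x. f (scale c x) = c * f x"
  shows "lin_fun scale f"
  using assms unfolding lin_fun_def linear_iff by (auto simp: vector_space_field)

lemma lin_fun_compose:
  "lin_fun scale f \<Longrightarrow> Vector_Spaces.linear scale scale p \<Longrightarrow> lin_fun scale (f \<circ> p)"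
  unfolding lin_fun_def by (rule Vector_Spaces.linear_compose[rotated])

lemma lin_fun_separating:
  fixes scale :: "'k::field \<Rightarrow> 'c::ab_group_add \<Rightarrow> 'c"
  assumes "vector_space scale" "x \<noteq> 0"
  shows "\<exists>f. lin_fun scale f \<and> f x = 1"
proof -
  interpret vector_space_pair scale "(*) :: 'k::field \<Rightarrow> 'k \<Rightarrow> 'k"
    by (simp add: vector_space_pair_def assms(1) vector_space_field)
  have "vs1.independent {x}"
    using assms by (simp add: vs1.independent_insert vs1.span_empty)
  then show ?thesis
    using linear_independent_extend[of "{x}" "\<lambda>_. 1"] unfolding lin_fun_def by auto
qed

lemma eq_0_if_lin_funs_vanish:
  assumes "vector_space scale" "\<And>f. lin_fun scale f \<Longrightarrow> f x = 0"
  shows "x = 0"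
  using lin_fun_separating[OF assms(1)] assms(2) by force

lemma lin_list_update:
  "lin_list scale n fs \<Longrightarrow> lin_fun scale h \<Longrightarrow> lin_list scale n (fs[i := h])"
  unfolding lin_list_def using set_update_subset_insert by fastforce

lemma lin_list_SucE:
  assumes "lin_list scale (Suc n) fs"
  obtains gs g where "fs = gs @ [g]" "lin_list scale n gs" "lin_fun scale g"
  using assms by (cases fs rule: rev_cases) (auto simp: lin_list_def)

lemma lin_list_2_iff:
  "lin_list scale 2 fs \<longleftrightarrow> (\<exists>f g. fs = [f, g] \<and> lin_fun scale f \<and> lin_fun scale g)"
  by (auto simp: lin_list_def numeral_2_eq_2 length_Suc_conv)

subsection \<open>Tensors\<close>

lemma tensorsE:
  fixes scale :: "'k::field \<Rightarrow> 'c::ab_group_add \<Rightarrow> 'c"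
  assumes "t \<in> tensors scale V n"
  obtains m and c :: "nat \<Rightarrow> 'k" and vs where
    "t = (\<lambda>fs. \<Sum>j<m. c j * ptens scale (vs j) fs)"
    "\<And>j. j < m \<Longrightarrow> length (vs j) = n" "\<And>j. j < m \<Longrightarrow> set (vs j) \<subseteq> V"
  using assms unfolding tensors_def by blast

lemma tensorsI:
  fixes scale :: "'k::field \<Rightarrow> 'c::ab_group_add \<Rightarrow> 'c" and c :: "nat \<Rightarrow> 'k"
  assumes "\<And>j. j < m \<Longrightarrow> length (vs j) = n" "\<And>j. j < m \<Longrightarrow> set (vs j) \<subseteq> V"
  shows "(\<lambda>fs. \<Sum>j<m. c j * ptens scale (vs j) fs) \<in> tensors scale V n"
  unfolding tensors_def mem_Collect_eq
  by (rule exI[of _ m], rule exI[of _ c], rule exI[of _ vs]) (use assms in auto)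

lemma ptens_eq_prod: "lin_list scale (length vs) fs \<Longrightarrow> ptens scale vs fs = (\<Prod>i<length vs. (fs ! i) (vs ! i))"
  and ptens_eq_0: "\<not> lin_list scale (length vs) fs \<Longrightarrow> ptens scale vs fs = 0"
  unfolding ptens_def by simp_all

lemma ptens_2:
  "length vs = 2 \<Longrightarrow> lin_fun scale f \<Longrightarrow> lin_fun scale g \<Longrightarrow> ptens scale vs [f, g] = f (vs ! 0) * g (vs ! 1)"
  by (simp add: ptens_def lin_list_def numeral_2_eq_2 lessThan_Suc)

lemma ptens_snoc:
  assumes "lin_list scale (length vs) fs" "lin_fun scale g"
  shows "ptens scale (vs @ [b]) (fs @ [g]) = ptens scale vs fs * g b"
proof -
  have "length fs = length vs" using assms(1) by (simp add: lin_list_def)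
  moreover have "lin_list scale (length (vs @ [b])) (fs @ [g])"
    using assms by (auto simp: lin_list_def)
  ultimately show ?thesis
    using assms(1) by (simp add: ptens_eq_prod nth_append)
qed

lemma ptens_map_compose:
  assumes "lin_list scale (length vs) fs" "Vector_Spaces.linear scale scale p"
  shows "ptens scale vs (map (\<lambda>f. f \<circ> p) fs) = ptens scale (map p vs) fs"
proof -
  have "lin_list scale (length vs) (map (\<lambda>f. f \<circ> p) fs)"
    using assms lin_fun_compose by (auto simp: lin_list_def)
  then show ?thesis
    using assms(1) by (simp add: ptens_eq_prod lin_list_def)
qed

lemma tensors_zero: "(\<lambda>_. 0) \<in> tensors scale V n"
  unfolding tensors_def by (auto intro!: exI[of _ 0])

lemma tensors_ptens: "length vs = n \<Longrightarrow> set vs \<subseteq> V \<Longrightarrow> ptens scale vs \<in> tensors scale V n"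
  using tensorsI[of "Suc 0" "\<lambda>_. vs" n V "\<lambda>_. 1" scale] by simp

lemma tensors_scale:
  assumes "t \<in> tensors scale V n"
  shows "(\<lambda>fs. a * t fs) \<in> tensors scale V n"
proof -
  obtain m :: nat and c vs where t: "t = (\<lambda>fs. \<Sum>j<m. c j * ptens scale (vs j) fs)"
    "\<And>j. j < m \<Longrightarrow> length (vs j) = n" "\<And>j. j < m \<Longrightarrow> set (vs j) \<subseteq> V"
    using assms by (rule tensorsE) blast
  have "(\<lambda>fs. \<Sum>j<m. (a * c j) * ptens scale (vs j) fs) \<in> tensors scale V n"
    using t by (intro tensorsI)
  then show ?thesis unfolding t by (simp add: sum_distrib_left mult.assoc)
qed

lemma tensors_add:
  assumes "t1 \<in> tensors scale V n" "t2 \<in> tensors scale V n"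
  shows "(\<lambda>fs. t1 fs + t2 fs) \<in> tensors scale V n"
proof -
  obtain m1 :: nat and c1 vs1 where t1: "t1 = (\<lambda>fs. \<Sum>j<m1. c1 j * ptens scale (vs1 j) fs)"
    "\<And>j. j < m1 \<Longrightarrow> length (vs1 j) = n" "\<And>j. j < m1 \<Longrightarrow> set (vs1 j) \<subseteq> V"
    using assms(1) by (rule tensorsE) blast
  obtain m2 :: nat and c2 vs2 where t2: "t2 = (\<lambda>fs. \<Sum>j<m2. c2 j * ptens scale (vs2 j) fs)"
    "\<And>j. j < m2 \<Longrightarrow> length (vs2 j) = n" "\<And>j. j < m2 \<Longrightarrow> set (vs2 j) \<subseteq> V"
    using assms(2) by (rule tensorsE) blast
  define c where "c j = (if j < m1 then c1 j else c2 (j - m1))" for j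
  define vs where "vs j = (if j < m1 then vs1 j else vs2 (j - m1))" for j
  have split: "(\<Sum>j<m1 + m. f j) = (\<Sum>j<m1. f j) + (\<Sum>j<m. f (m1 + j))" for m and f :: "nat \<Rightarrow> 'z::comm_monoid_add"
    by (induction m) (simp_all add: add_ac)
  have "(\<lambda>fs. \<Sum>j<m1 + m2. c j * ptens scale (vs j) fs) \<in> tensors scale V n"
    using t1 t2 by (intro tensorsI) (auto simp: vs_def)
  then show ?thesis
    unfolding split t1 t2 by (simp add: c_def vs_def)
qed

lemma tensors_diff:
  "t1 \<in> tensors scale V n \<Longrightarrow> t2 \<in> tensors scale V n \<Longrightarrow> (\<lambda>fs. t1 fs - t2 fs) \<in> tensors scale V n"
  using tensors_add[OF _ tensors_scale, of t1 scale V n t2 "-1"] by simp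

lemma tensors_sum:
  "finite I \<Longrightarrow> (\<And>i. i \<in> I \<Longrightarrow> T i \<in> tensors scale V n) \<Longrightarrow> (\<lambda>fs. \<Sum>i\<in>I. T i fs) \<in> tensors scale V n"
  by (induction I rule: finite_induct) (auto intro: tensors_zero tensors_add)

lemma tensors_eq_0: "t \<in> tensors scale V n \<Longrightarrow> \<not> lin_list scale n fs \<Longrightarrow> t fs = 0"
  by (erule tensorsE) (simp add: ptens_eq_0)

lemma tensors_eqI:
  assumes "t' \<in> tensors scale V n"
    and "\<And>fs. lin_list scale n fs \<Longrightarrow> t fs = t' fs" "\<And>fs. \<not> lin_list scale n fs \<Longrightarrow> t fs = 0"
  shows "t \<in> tensors scale V n"
proof -
  have "t = t'" using assms tensors_eq_0[OF assms(1)] by fastforce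
  then show ?thesis using assms(1) by simp
qed

lemma tensors_slot:
  assumes "t \<in> tensors scale V n" "lin_list scale n fs" "i < n"
  shows "\<exists>v. \<forall>h. lin_fun scale h \<longrightarrow> t (fs[i := h]) = h v"
proof -
  obtain m :: nat and c vs where t: "t = (\<lambda>fs. \<Sum>j<m. c j * ptens scale (vs j) fs)"
    "\<And>j. j < m \<Longrightarrow> length (vs j) = n"
    using assms(1) by (rule tensorsE) blast
  define others where "others j = (\<Prod>l\<in>{..<n}-{i}. (fs ! l) (vs j ! l))" for j
  have "t (fs[i := h]) = h (\<Sum>j<m. scale (c j * others j) (vs j ! i))" if h: "lin_fun scale h" for h
  proof -
    have "ptens scale (vs j) (fs[i := h]) = h (vs j ! i) * others j" if "j < m" for j
    proof -
      have "ptens scale (vs j) (fs[i := h]) = (\<Prod>l<n. (fs[i := h] ! l) (vs j ! l))"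
        using lin_list_update[OF assms(2) h] t(2)[OF that] by (simp add: ptens_eq_prod)
      also have "\<dots> = h (vs j ! i) * others j"
        using assms(2,3) by (simp add: prod.remove[of _ i] others_def lin_list_def)
      finally show ?thesis .
    qed
    then have "t (fs[i := h]) = (\<Sum>j<m. h (scale (c j * others j) (vs j ! i)))"
      unfolding t using h by (auto simp: lin_fun_scale mult_ac intro!: sum.cong)
    then show ?thesis
      using module_hom.sum[OF lin_fun_module_hom[OF h], symmetric] by simp
  qed
  then show ?thesis by blast
qed

lemma tensors_snoc:
  assumes "t \<in> tensors scale V n" "b \<in> V"
  shows "(\<lambda>fs. if lin_list scale (Suc n) fs then t (butlast fs) * last fs b else 0) \<in> tensors scale V (Suc n)"
proof -
  obtain m :: nat and c vs where t: "t = (\<lambda>fs. \<Sum>j<m. c j * ptens scale (vs j) fs)"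
    "\<And>j. j < m \<Longrightarrow> length (vs j) = n" "\<And>j. j < m \<Longrightarrow> set (vs j) \<subseteq> V"
    using assms(1) by (rule tensorsE) blast
  have "(\<lambda>fs. \<Sum>j<m. c j * ptens scale (vs j @ [b]) fs) \<in> tensors scale V (Suc n)"
    using t assms(2) by (intro tensorsI) auto
  then show ?thesis
  proof (rule tensors_eqI)
    fix fs assume fs: "lin_list scale (Suc n) fs"
    then obtain gs g where "fs = gs @ [g]" "lin_list scale n gs" "lin_fun scale g"
      by (rule lin_list_SucE)
    with fs show "(if lin_list scale (Suc n) fs then t (butlast fs) * last fs b else 0) =
        (\<Sum>j<m. c j * ptens scale (vs j @ [b]) fs)"
      using t by (auto simp: ptens_snoc sum_distrib_right mult.assoc intro!: sum.cong)
  qed simp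
qed

lemma tensors_map_compose:
  assumes "t \<in> tensors scale V n" "Vector_Spaces.linear scale scale p" "range p \<subseteq> W"
  shows "(\<lambda>fs. if lin_list scale n fs then t (map (\<lambda>f. f \<circ> p) fs) else 0) \<in> tensors scale W n"
proof -
  obtain m :: nat and c vs where t: "t = (\<lambda>fs. \<Sum>j<m. c j * ptens scale (vs j) fs)"
    "\<And>j. j < m \<Longrightarrow> length (vs j) = n"
    using assms(1) by (rule tensorsE) blast
  have "(\<lambda>fs. \<Sum>j<m. c j * ptens scale (map p (vs j)) fs) \<in> tensors scale W n"
    using t(2) assms(3) by (intro tensorsI) auto
  then show ?thesis
    by (rule tensors_eqI) (use t assms(2) in \<open>auto simp: ptens_map_compose intro!: sum.cong\<close>)
qed

locale coalg =
  fixes scale :: "'k::field \<Rightarrow> 'c::ab_group_add \<Rightarrow> 'c"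
    and \<Delta> :: "'c \<Rightarrow> ('c \<Rightarrow> 'k) list \<Rightarrow> 'k"
    and \<epsilon> :: "'c \<Rightarrow> 'k"
  assumes coalgebra: "coalgebra scale \<Delta> \<epsilon>"
begin

sublocale vector_space scale
  using coalgebra by (simp add: coalgebra_def)

lemma Delta_tensor: "\<Delta> x \<in> tensors scale UNIV 2"
  and Delta_add: "\<Delta> (x + y) fs = \<Delta> x fs + \<Delta> y fs"
  and Delta_scale: "\<Delta> (scale a x) fs = a * \<Delta> x fs"
  and lin_fun_counit: "lin_fun scale \<epsilon>"
  and coassoc: "lin_fun scale f \<Longrightarrow> lin_fun scale g \<Longrightarrow> lin_fun scale h \<Longrightarrow>
      \<Delta> x [\<lambda>a. \<Delta> a [f, g], h] = \<Delta> x [f, \<lambda>b. \<Delta> b [g, h]]"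
  and counit_left: "lin_fun scale f \<Longrightarrow> \<Delta> x [\<epsilon>, f] = f x"
  and counit_right: "lin_fun scale f \<Longrightarrow> \<Delta> x [f, \<epsilon>] = f x"
  using coalgebra unfolding coalgebra_def by blast+

lemmas counit_add = lin_fun_add[OF lin_fun_counit]
  and counit_scale = lin_fun_scale[OF lin_fun_counit]
  and counit_diff = lin_fun_diff[OF lin_fun_counit]

lemma lin_fun_Delta: "lin_fun scale (\<lambda>a. \<Delta> a fs)"
  by (rule lin_funI) (auto simp: Delta_add Delta_scale vector_space_axioms)

lemma Delta_slot_left: "lin_fun scale g \<Longrightarrow> \<exists>u. \<forall>h. lin_fun scale h \<longrightarrow> \<Delta> x [h, g] = h u"
  using tensors_slot[OF Delta_tensor, of "[g, g]" 0] by (simp add: lin_list_2_iff)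

lemma Delta_slot_right: "lin_fun scale f \<Longrightarrow> \<exists>u. \<forall>h. lin_fun scale h \<longrightarrow> \<Delta> x [f, h] = h u"
  using tensors_slot[OF Delta_tensor, of "[f, f]" 1] by (simp add: lin_list_2_iff)

text \<open>\<open>iter_coprod [f\<^sub>1, \<dots>, f\<^sub>n] x\<close> is \<open>(f\<^sub>1 \<otimes> \<dots> \<otimes> f\<^sub>n) (\<Delta>\<^sup>(\<^sup>n\<^sup>) x)\<close>, the \<open>n\<close>-fold coproduct of \<open>x\<close>
  paired with \<open>n\<close> functionals; for \<open>n = 0\<close> it is the counit.\<close>

definition iter_coprod :: "('c \<Rightarrow> 'k) list \<Rightarrow> 'c \<Rightarrow> 'k" where
  "iter_coprod fs = fold (\<lambda>g F x. \<Delta> x [F, g]) fs \<epsilon>"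

lemma iter_coprod_Nil [simp]: "iter_coprod [] = \<epsilon>"
  and iter_coprod_snoc [simp]: "iter_coprod (fs @ [g]) x = \<Delta> x [iter_coprod fs, g]"
  by (simp_all add: iter_coprod_def)

lemma lin_fun_iter_coprod: "lin_fun scale (iter_coprod fs)"
proof (induction fs rule: rev_induct)
  case (snoc g fs)
  have "iter_coprod (fs @ [g]) = (\<lambda>x. \<Delta> x [iter_coprod fs, g])"
    by auto
  then show ?case using lin_fun_Delta by simp
qed (simp add: lin_fun_counit)

lemma iter_coprod_single: "lin_fun scale g \<Longrightarrow> iter_coprod [g] = g"
  using iter_coprod_snoc[of "[]"] counit_left by auto

lemma iter_coprod_append:
  assumes "\<forall>h\<in>set hs. lin_fun scale h"
  shows "\<Delta> x [iter_coprod fs, iter_coprod hs] = iter_coprod (fs @ hs) x"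
  using assms
proof (induction hs arbitrary: x rule: rev_induct)
  case Nil
  then show ?case using counit_right[OF lin_fun_iter_coprod] by simp
next
  case (snoc g hs)
  then have g: "lin_fun scale g" by simp
  have "\<Delta> x [iter_coprod fs, iter_coprod (hs @ [g])] = \<Delta> x [iter_coprod fs, \<lambda>b. \<Delta> b [iter_coprod hs, g]]"
    by (simp add: iter_coprod_def)
  also have "\<dots> = \<Delta> x [\<lambda>a. \<Delta> a [iter_coprod fs, iter_coprod hs], g]"
    using coassoc[OF lin_fun_iter_coprod lin_fun_iter_coprod g] by simp
  also have "(\<lambda>a. \<Delta> a [iter_coprod fs, iter_coprod hs]) = iter_coprod (fs @ hs)"
    using snoc by auto
  finally show ?case
    using iter_coprod_snoc[of "fs @ hs" g x] by simp
qed

lemma iter_coprod_merge: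
  assumes "lin_fun scale g1" "lin_fun scale g2" "\<forall>h\<in>set hs. lin_fun scale h"
  shows "iter_coprod (fs @ [g1, g2] @ hs) = iter_coprod (fs @ (\<lambda>b. \<Delta> b [g1, g2]) # hs)"
proof
  fix x
  have merged: "iter_coprod (fs @ [g1, g2]) = iter_coprod (fs @ [\<lambda>b. \<Delta> b [g1, g2]])"
  proof
    fix y
    have "iter_coprod (fs @ [g1, g2]) y = \<Delta> y [\<lambda>a. \<Delta> a [iter_coprod fs, g1], g2]"
      using iter_coprod_snoc[of "fs @ [g1]" g2 y] by (simp add: iter_coprod_def)
    then show "iter_coprod (fs @ [g1, g2]) y = iter_coprod (fs @ [\<lambda>b. \<Delta> b [g1, g2]]) y"
      using coassoc[OF lin_fun_iter_coprod assms(1,2)] by simp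
  qed
  have "iter_coprod (fs @ [g1, g2] @ hs) x = \<Delta> x [iter_coprod (fs @ [g1, g2]), iter_coprod hs]"
    using iter_coprod_append[OF assms(3)] by simp
  also have "\<dots> = iter_coprod ((fs @ [\<lambda>b. \<Delta> b [g1, g2]]) @ hs) x"
    unfolding merged by (rule iter_coprod_append[OF assms(3)])
  finally show "iter_coprod (fs @ [g1, g2] @ hs) x = iter_coprod (fs @ (\<lambda>b. \<Delta> b [g1, g2]) # hs) x"
    by simp
qed

lemma iter_coprod_tensor:
  "(\<lambda>fs. if lin_list scale n fs then iter_coprod fs x else 0) \<in> tensors scale UNIV n"
proof (induction n arbitrary: x)
  case 0
  have "(\<lambda>fs. \<epsilon> x * ptens scale [] fs) \<in> tensors scale UNIV 0"
    by (intro tensors_scale tensors_ptens) auto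
  then show ?case
    by (rule tensors_eqI) (auto simp: lin_list_def ptens_def)
next
  case (Suc n)
  obtain m :: nat and c vs where D: "\<Delta> x = (\<lambda>fs. \<Sum>j<m. c j * ptens scale (vs j) fs)"
    "\<And>j. j < m \<Longrightarrow> length (vs j) = 2"
    using Delta_tensor by (rule tensorsE) blast
  let ?T = "\<lambda>a fs. if lin_list scale n fs then iter_coprod fs a else 0"
  have "(\<lambda>fs. \<Sum>j<m. c j * (if lin_list scale (Suc n) fs then ?T (vs j ! 0) (butlast fs) * last fs (vs j ! 1) else 0))
     \<in> tensors scale UNIV (Suc n)"
    by (intro tensors_sum tensors_scale tensors_snoc Suc) auto
  then show ?case
  proof (rule tensors_eqI)
    fix fs assume fs: "lin_list scale (Suc n) fs"
    then obtain gs g where gs: "fs = gs @ [g]" "lin_list scale n gs" "lin_fun scale g"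
      by (rule lin_list_SucE)
    have "iter_coprod fs x = (\<Sum>j<m. c j * (iter_coprod gs (vs j ! 0) * g (vs j ! 1)))"
      using gs D by (auto simp: ptens_2 lin_fun_iter_coprod intro!: sum.cong)
    with fs gs show "(if lin_list scale (Suc n) fs then iter_coprod fs x else 0) =
      (\<Sum>j<m. c j * (if lin_list scale (Suc n) fs then ?T (vs j ! 0) (butlast fs) * last fs (vs j ! 1) else 0))"
      by simp
  qed simp
qed

end

locale pointed_coalg = coalg +
  fixes e
  assumes Delta_e: "\<Delta> e = ptens scale [e, e]"
    and e_nonzero: "e \<noteq> 0"
begin

abbreviation Prim where
  "Prim \<equiv> prim scale \<Delta> e"

lemma Delta_e_eq: "lin_fun scale f \<Longrightarrow> lin_fun scale g \<Longrightarrow> \<Delta> e [f, g] = f e * g e"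
  by (simp add: Delta_e ptens_2)

lemma counit_e: "\<epsilon> e = 1"
proof -
  obtain f where f: "lin_fun scale f" "f e = 1"
    using lin_fun_separating[OF vector_space_axioms e_nonzero] by blast
  show ?thesis
    using counit_left[OF f(1), of e] Delta_e_eq[OF lin_fun_counit f(1)] f(2) by simp
qed

lemma prim_iff:
  "x \<in> Prim \<longleftrightarrow> (\<forall>f g. lin_fun scale f \<longrightarrow> lin_fun scale g \<longrightarrow> \<Delta> x [f, g] = f x * g e + f e * g x)"
proof
  assume "x \<in> Prim"
  then show "\<forall>f g. lin_fun scale f \<longrightarrow> lin_fun scale g \<longrightarrow> \<Delta> x [f, g] = f x * g e + f e * g x"
    by (simp add: prim_def ptens_2)
next
  assume prim: "\<forall>f g. lin_fun scale f \<longrightarrow> lin_fun scale g \<longrightarrow> \<Delta> x [f, g] = f x * g e + f e * g x"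
  have "\<Delta> x fs = ptens scale [x, e] fs + ptens scale [e, x] fs" for fs
  proof (cases "lin_list scale 2 fs")
    case True
    then show ?thesis using prim by (auto simp: lin_list_2_iff ptens_2)
  next
    case False
    then show ?thesis
      using tensors_eq_0[OF Delta_tensor] ptens_eq_0[of scale "[x, e]" fs] ptens_eq_0[of scale "[e, x]" fs]
      by (simp add: numeral_2_eq_2)
  qed
  then show "x \<in> Prim" by (simp add: prim_def)
qed

lemma prim_subspace: "subspace Prim"
proof (rule subspaceI)
  show "0 \<in> Prim"
    using Delta_scale[of 0 0] by (simp add: prim_iff lin_fun_zero)
  show "x + y \<in> Prim" if "x \<in> Prim" "y \<in> Prim" for x y
    using that by (simp add: prim_iff Delta_add lin_fun_add algebra_simps)
  show "scale c x \<in> Prim" if "x \<in> Prim" for c x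
    using that by (simp add: prim_iff Delta_scale lin_fun_scale algebra_simps)
qed

lemma counit_prim:
  assumes "p \<in> Prim"
  shows "\<epsilon> p = 0"
proof -
  obtain f where f: "lin_fun scale f" "f e = 1"
    using lin_fun_separating[OF vector_space_axioms e_nonzero] by blast
  show ?thesis
    using counit_left[OF f(1), of p] assms f lin_fun_counit counit_e by (simp add: prim_iff)
qed

lemma e_notin_prim: "e \<notin> Prim"
  using counit_prim counit_e by auto

lemma prim_proj_exists:
  "\<exists>\<pi>. Vector_Spaces.linear scale scale \<pi> \<and> range \<pi> \<subseteq> Prim \<and> (\<forall>p\<in>Prim. \<pi> p = p) \<and> \<pi> e = 0"
proof -
  interpret vector_space_pair scale scale
    by (simp add: vector_space_pair_def vector_space_axioms)
  obtain B where B: "B \<subseteq> Prim" "independent B" "Prim \<subseteq> span B"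
    using maximal_independent_subset by blast
  have span_B: "span B = Prim"
    using B span_minimal[OF B(1) prim_subspace] by auto
  have "independent (insert e B)"
    using B(2) e_notin_prim span_B by (intro independent_insertI) auto
  from linear_independent_extend_subspace[OF this, of "\<lambda>x. if x \<in> B then x else 0"]
  obtain \<pi> where \<pi>: "Vector_Spaces.linear scale scale \<pi>"
      "\<forall>x\<in>insert e B. \<pi> x = (if x \<in> B then x else 0)"
      "range \<pi> = span ((\<lambda>x. if x \<in> B then x else 0) ` insert e B)"
    by blast
  have "range \<pi> \<subseteq> span (insert 0 B)"
    unfolding \<pi>(3) by (intro span_mono) auto
  then have "range \<pi> \<subseteq> Prim"
    by (simp add: span_insert_0 span_B)
  moreover have "\<pi> p = p" if "p \<in> Prim" for p
    using linear_eq_on[OF \<pi>(1) linear_id, of p B] \<pi>(2) that span_B by auto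
  moreover have "\<pi> e = 0"
    using \<pi>(2) e_notin_prim B(1) by auto
  ultimately show ?thesis using \<pi>(1) by blast
qed

definition prim_proj where
  "prim_proj = (SOME \<pi>. Vector_Spaces.linear scale scale \<pi> \<and> range \<pi> \<subseteq> Prim \<and> (\<forall>p\<in>Prim. \<pi> p = p) \<and> \<pi> e = 0)"

lemma linear_prim_proj: "Vector_Spaces.linear scale scale prim_proj"
  and range_prim_proj: "range prim_proj \<subseteq> Prim"
  and prim_proj_prim: "p \<in> Prim \<Longrightarrow> prim_proj p = p"
  and prim_proj_e: "prim_proj e = 0"
  using someI_ex[OF prim_proj_exists] unfolding prim_proj_def[symmetric] by blast+

lemma prim_proj_eq:
  assumes "v - scale c e \<in> Prim"
  shows "prim_proj v = v - scale c e"
proof -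
  have "prim_proj (v - scale c e) = prim_proj v"
    using linear_prim_proj unfolding module_hom_iff_linear[symmetric]
    by (simp add: module_hom.diff module_hom.scale prim_proj_e)
  then show ?thesis
    using prim_proj_prim[OF assms] by simp
qed

definition reduced where
  "reduced f x = f x - f e * \<epsilon> x"

lemma lin_fun_reduced: "lin_fun scale f \<Longrightarrow> lin_fun scale (reduced f)"
  by (rule lin_funI)
    (auto simp: reduced_def vector_space_axioms lin_fun_add lin_fun_scale counit_add counit_scale algebra_simps)

lemma reduced_e [simp]: "reduced f e = 0"
  by (simp add: reduced_def counit_e)

lemma reduced_eq: "\<epsilon> x = 0 \<Longrightarrow> reduced f x = f x"
  by (simp add: reduced_def)

lemma Delta_reduced_left:
  assumes "lin_fun scale f" "lin_fun scale g"
  shows "\<Delta> x [f, g] = \<Delta> x [reduced f, g] + f e * g x"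
proof -
  obtain u where u: "\<forall>h. lin_fun scale h \<longrightarrow> \<Delta> x [h, g] = h u"
    using Delta_slot_left[OF assms(2)] by blast
  show ?thesis
    using u assms lin_fun_reduced lin_fun_counit counit_left[OF assms(2), of x] by (simp add: reduced_def)
qed

lemma Delta_reduced_right:
  assumes "lin_fun scale f" "lin_fun scale g"
  shows "\<Delta> x [f, g] = \<Delta> x [f, reduced g] + g e * f x"
proof -
  obtain u where u: "\<forall>h. lin_fun scale h \<longrightarrow> \<Delta> x [f, h] = h u"
    using Delta_slot_right[OF assms(1)] by blast
  show ?thesis
    using u assms lin_fun_reduced lin_fun_counit counit_right[OF assms(1), of x] by (simp add: reduced_def)
qed

definition vanish_at_e where
  "vanish_at_e hs \<longleftrightarrow> (\<forall>h\<in>set hs. lin_fun scale h \<and> h e = 0)"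

lemma vanish_at_e_simps [simp]:
  "vanish_at_e []"
  "vanish_at_e (h # hs) \<longleftrightarrow> lin_fun scale h \<and> h e = 0 \<and> vanish_at_e hs"
  "vanish_at_e (hs @ gs) \<longleftrightarrow> vanish_at_e hs \<and> vanish_at_e gs"
  by (auto simp: vanish_at_e_def)

lemma vanish_at_e_lin_list: "vanish_at_e hs \<Longrightarrow> lin_list scale (length hs) hs"
  by (simp add: vanish_at_e_def lin_list_def)

lemma iter_coprod_e: "vanish_at_e hs \<Longrightarrow> hs \<noteq> [] \<Longrightarrow> iter_coprod hs e = 0"
  by (induction hs rule: rev_induct) (auto simp: Delta_e_eq lin_fun_iter_coprod)

lemma prim_if_reduced_Delta_vanishes:
  assumes "\<And>g1 g2. vanish_at_e [g1, g2] \<Longrightarrow> \<Delta> v [g1, g2] = 0"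
  shows "v - scale (\<epsilon> v) e \<in> Prim"
proof -
  define v0 where "v0 = v - scale (\<epsilon> v) e"
  have counit_v0: "\<epsilon> v0 = 0"
    by (simp add: v0_def counit_diff counit_scale counit_e)
  have "\<Delta> v0 [f, g] = f v0 * g e + f e * g v0" if "lin_fun scale f" "lin_fun scale g" for f g
  proof -
    have "\<Delta> v0 [reduced f, reduced g] = \<Delta> v [reduced f, reduced g] - \<epsilon> v * \<Delta> e [reduced f, reduced g]"
      unfolding v0_def using lin_fun_diff[OF lin_fun_Delta] by (simp add: Delta_scale)
    also have "\<dots> = 0"
      using assms that lin_fun_reduced by (simp add: Delta_e_eq)
    finally have "\<Delta> v0 [reduced f, reduced g] = 0" .
    then show ?thesis
      using Delta_reduced_left[OF that, of v0] Delta_reduced_right[OF lin_fun_reduced that(2), of f v0] that(1)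
      by (simp add: reduced_eq[OF counit_v0] mult.commute)
  qed
  then show ?thesis unfolding v0_def[symmetric] prim_iff by blast
qed

lemma dtil_iter_eq_iter_coprod:
  "vanish_at_e hs \<Longrightarrow> length hs = n + 2 \<Longrightarrow> dtil_iter \<Delta> e n x hs = iter_coprod hs x"
proof (induction n arbitrary: x hs)
  case 0
  then obtain f g where "hs = [f, g]" "lin_fun scale f" "f e = 0" "g e = 0"
    by (auto simp: numeral_2_eq_2 length_Suc_conv)
  then show ?case
    using iter_coprod_snoc[of "[f]" g x] by (simp add: dtil_def iter_coprod_single)
next
  case (Suc n)
  then obtain gs g where hs: "hs = gs @ [g]" "length gs = n + 2"
    by (cases hs rule: rev_cases) auto
  with Suc.prems have "vanish_at_e gs" "g e = 0" "gs \<noteq> []"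
    by auto
  with Suc.IH[of gs] hs show ?case
    by (simp add: dtil_def iter_coprod_e)
qed

text \<open>Pairing \<open>\<Delta>\<close> with functionals vanishing at \<open>e\<close> computes the reduced coproduct
  \<open>\<Delta>\<^sup>~\<close>, so \<open>reduced_vanishes (n + 1) x\<close> says \<open>(\<Delta>\<^sup>~)\<^sup>n x = 0\<close>
  (cf. \<open>dtil_iter_eq_iter_coprod\<close>).\<close>

definition reduced_vanishes where
  "reduced_vanishes k x \<longleftrightarrow> (\<forall>hs. length hs = k \<longrightarrow> vanish_at_e hs \<longrightarrow> iter_coprod hs x = 0)"

lemma reduced_vanishes_Suc:
  assumes "1 \<le> k" "reduced_vanishes k x"
  shows "reduced_vanishes (Suc k) x"
  unfolding reduced_vanishes_def
proof (intro allI impI)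
  fix hs assume hs: "length hs = Suc k" "vanish_at_e hs"
  obtain A g1 g2 where A: "hs = A @ [g1, g2]"
    using hs(1) assms(1)
    by (cases hs rule: rev_cases; cases "butlast hs" rule: rev_cases) auto
  with hs have "vanish_at_e (A @ [\<lambda>b. \<Delta> b [g1, g2]])" "length (A @ [\<lambda>b. \<Delta> b [g1, g2]]) = k"
    by (auto simp: lin_fun_Delta Delta_e_eq)
  then have "iter_coprod (A @ [\<lambda>b. \<Delta> b [g1, g2]]) x = 0"
    using assms(2) unfolding reduced_vanishes_def by blast
  then show "iter_coprod hs x = 0"
    using A hs iter_coprod_merge[of g1 g2 "[]" A] by simp
qed

lemma reduced_vanishes_mono:
  assumes "reduced_vanishes k x" "1 \<le> k" "k \<le> n"
  shows "reduced_vanishes n x"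
  using assms(3) by (induction n rule: dec_induct) (use assms(1,2) reduced_vanishes_Suc in auto)

subsection \<open>The comparison map into the tensor coalgebra\<close>

text \<open>\<open>component n\<close> is the degree-\<open>n\<close> part \<open>prim_proj\<^sup>\<otimes>\<^sup>n \<circ> \<Delta>\<^sup>(\<^sup>n\<^sup>)\<close> of the map \<open>C \<rightarrow> T(Prim C)\<close>.\<close>

definition component where
  "component n x fs = (if lin_list scale n fs then iter_coprod (map (\<lambda>f. f \<circ> prim_proj) fs) x else 0)"

lemma vanish_at_e_map_prim_proj: "\<forall>f\<in>set fs. lin_fun scale f \<Longrightarrow> vanish_at_e (map (\<lambda>f. f \<circ> prim_proj) fs)"
  by (auto simp: vanish_at_e_def prim_proj_e lin_fun_zero lin_fun_compose linear_prim_proj)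

lemma component_tensor: "component n x \<in> tensors scale Prim n"
proof -
  have "(\<lambda>fs. if lin_list scale n fs
      then (\<lambda>fs. if lin_list scale n fs then iter_coprod fs x else 0) (map (\<lambda>f. f \<circ> prim_proj) fs) else 0)
     \<in> tensors scale Prim n"
    by (rule tensors_map_compose[OF iter_coprod_tensor linear_prim_proj range_prim_proj])
  moreover have "\<And>fs. lin_list scale n fs \<Longrightarrow> lin_list scale n (map (\<lambda>f. f \<circ> prim_proj) fs)"
    by (auto simp: lin_list_def lin_fun_compose linear_prim_proj)
  ultimately show ?thesis
    by (simp add: component_def[abs_def] if_distrib cong: if_cong)
qed

lemma component_add: "component n (x + y) fs = component n x fs + component n y fs"
  and component_scale: "component n (scale c x) fs = c * component n x fs"
  using lin_fun_add[OF lin_fun_iter_coprod] lin_fun_scale[OF lin_fun_iter_coprod]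
  by (simp_all add: component_def)

lemma component_zero: "component n 0 fs = 0"
  using component_scale[of n 0 0 fs] by simp

lemma component_sum:
  "component n (\<Sum>j<(m::nat). scale (c j) (w j)) fs = (\<Sum>j<m. c j * component n (w j) fs)"
  by (induction m) (simp_all add: component_zero component_add component_scale)

lemma component_0_Nil: "component 0 x [] = \<epsilon> x"
  by (simp add: component_def lin_list_def)

lemma component_e: "1 \<le> n \<Longrightarrow> component n e fs = 0"
  by (auto simp: component_def lin_list_def intro!: iter_coprod_e vanish_at_e_map_prim_proj)

lemma component_Delta:
  assumes "lin_list scale k fs" "lin_list scale m gs"
  shows "\<Delta> x [\<lambda>a. component k a fs, \<lambda>b. component m b gs] = component (k + m) x (fs @ gs)"
proof -
  have "lin_list scale (k + m) (fs @ gs)"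
    using assms by (auto simp: lin_list_def)
  moreover have "\<forall>g\<in>set (map (\<lambda>f. f \<circ> prim_proj) gs). lin_fun scale g"
    using assms(2) by (auto simp: lin_list_def lin_fun_compose linear_prim_proj)
  ultimately show ?thesis
    using assms iter_coprod_append by (simp add: component_def[abs_def])
qed

text \<open>Replacing one reduced functional \<open>h\<close> by \<open>h \<circ> prim_proj\<close> does not change the value: the
  vector that \<open>h\<close> is paired with is, up to a multiple of \<open>e\<close>, primitive, because the iterated
  coproduct of one degree higher vanishes on reduced functionals.\<close>

lemma iter_coprod_prim_proj_slot:
  assumes "reduced_vanishes (Suc (length (A @ h # B))) x" "vanish_at_e (A @ h # B)"
  shows "iter_coprod (A @ (h \<circ> prim_proj) # B) x = iter_coprod (A @ h # B) x"
proof -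
  let ?k = "length A + Suc (length B)"
  have lin: "lin_list scale ?k (A @ h # B)"
    using vanish_at_e_lin_list[OF assms(2)] by simp
  obtain v where v: "\<forall>h'. lin_fun scale h' \<longrightarrow>
      (if lin_list scale ?k ((A @ h # B)[length A := h']) then iter_coprod ((A @ h # B)[length A := h']) x else 0) = h' v"
    using tensors_slot[OF iter_coprod_tensor lin, of "length A"] by auto
  have slot: "iter_coprod (A @ h' # B) x = h' v" if "lin_fun scale h'" for h'
    using v that lin_list_update[OF lin that, of "length A"] by (auto simp: list_update_append)
  have "v - scale (\<epsilon> v) e \<in> Prim"
  proof (rule prim_if_reduced_Delta_vanishes)
    fix g1 g2 assume g: "vanish_at_e [g1, g2]"
    have "\<Delta> v [g1, g2] = iter_coprod (A @ (\<lambda>b. \<Delta> b [g1, g2]) # B) x"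
      using slot[OF lin_fun_Delta] by simp
    also have "\<dots> = iter_coprod (A @ [g1, g2] @ B) x"
      using iter_coprod_merge[of g1 g2 B A] g assms(2) by (simp add: vanish_at_e_def)
    also have "\<dots> = 0"
      using assms g unfolding reduced_vanishes_def by auto
    finally show "\<Delta> v [g1, g2] = 0" .
  qed
  then have "prim_proj v = v - scale (\<epsilon> v) e"
    by (rule prim_proj_eq)
  moreover have "lin_fun scale h" "h e = 0"
    using assms(2) by auto
  ultimately show ?thesis
    using slot lin_fun_compose[OF _ linear_prim_proj] by (simp add: lin_fun_diff lin_fun_scale)
qed

lemma iter_coprod_map_prim_proj:
  assumes "reduced_vanishes (Suc (length (A @ B))) x" "vanish_at_e (A @ B)"
  shows "iter_coprod (A @ map (\<lambda>f. f \<circ> prim_proj) B) x = iter_coprod (A @ B) x"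
  using assms
proof (induction B arbitrary: A)
  case (Cons h B)
  have "vanish_at_e ((A @ [h \<circ> prim_proj]) @ B)"
    using Cons.prems(2) vanish_at_e_map_prim_proj[of "[h]"] by simp
  then have "iter_coprod ((A @ [h \<circ> prim_proj]) @ map (\<lambda>f. f \<circ> prim_proj) B) x
      = iter_coprod ((A @ [h \<circ> prim_proj]) @ B) x"
    using Cons by (intro Cons.IH) simp_all
  also have "\<dots> = iter_coprod (A @ h # B) x"
    using iter_coprod_prim_proj_slot Cons.prems by simp
  finally show ?case by (simp add: comp_def)
qed simp

lemma reduced_vanishes_pred:
  assumes "component k x = (\<lambda>_. 0)" "reduced_vanishes (Suc k) x"
  shows "reduced_vanishes k x"
  unfolding reduced_vanishes_def
proof (intro allI impI)
  fix hs assume hs: "length hs = k" "vanish_at_e hs"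
  have "iter_coprod hs x = iter_coprod (map (\<lambda>f. f \<circ> prim_proj) hs) x"
    using iter_coprod_map_prim_proj[of "[]" hs] hs assms(2) by simp
  also have "\<dots> = component k x hs"
    using vanish_at_e_lin_list[OF hs(2)] hs(1) by (simp add: component_def)
  finally show "iter_coprod hs x = 0"
    using assms(1) by simp
qed

end

subsection \<open>Injectivity\<close>

locale conilpotent_coalg = pointed_coalg +
  assumes nilpotent: "\<epsilon> x = 0 \<Longrightarrow> \<exists>n. \<forall>fs. lin_list scale (n + 2) fs \<longrightarrow> dtil_iter \<Delta> e n x fs = 0"
begin

lemma reduced_vanishes_nilpotent:
  assumes "\<epsilon> x = 0"
  obtains n where "reduced_vanishes (Suc (Suc n)) x"
proof -
  obtain n where "\<forall>fs. lin_list scale (n + 2) fs \<longrightarrow> dtil_iter \<Delta> e n x fs = 0"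
    using nilpotent[OF assms] by blast
  then have "reduced_vanishes (Suc (Suc n)) x"
    using dtil_iter_eq_iter_coprod vanish_at_e_lin_list by (fastforce simp: reduced_vanishes_def)
  then show ?thesis by (rule that)
qed

lemma component_finite: "finite {n. component n x \<noteq> (\<lambda>_. 0)}"
proof -
  define x0 where "x0 = x - scale (\<epsilon> x) e"
  have "\<epsilon> x0 = 0"
    by (simp add: x0_def counit_diff counit_scale counit_e)
  then obtain N where N: "reduced_vanishes (Suc (Suc N)) x0"
    by (rule reduced_vanishes_nilpotent)
  have "component n x fs = 0" if "Suc (Suc N) \<le> n" for n fs
  proof -
    have "component n x fs = component n (x0 + scale (\<epsilon> x) e) fs"
      by (simp add: x0_def)
    also have "\<dots> = component n x0 fs"
      using that by (simp add: component_add component_scale component_e)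
    finally have "component n x fs = component n x0 fs" .
    moreover have "reduced_vanishes n x0"
      using reduced_vanishes_mono[OF N _ that] by simp
    ultimately show ?thesis
      by (auto simp: component_def reduced_vanishes_def lin_list_def vanish_at_e_map_prim_proj)
  qed
  then have "{n. component n x \<noteq> (\<lambda>_. 0)} \<subseteq> {..<Suc (Suc N)}"
    by (auto simp: not_less[symmetric] fun_eq_iff)
  then show ?thesis
    using finite_subset by blast
qed

lemma component_inj:
  assumes "\<And>n. component n x = (\<lambda>_. 0)"
  shows "x = 0"
proof -
  have counit_x: "\<epsilon> x = 0"
    using assms[of 0] component_0_Nil[of x] by simp
  then obtain N where "reduced_vanishes (Suc (Suc N)) x"
    by (rule reduced_vanishes_nilpotent)
  moreover have "reduced_vanishes (Suc k) x \<Longrightarrow> reduced_vanishes 1 x" for k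
    by (induction k) (auto intro: reduced_vanishes_pred assms)
  ultimately have "reduced_vanishes 1 x"
    by blast
  have "f x = 0" if f: "lin_fun scale f" for f
  proof -
    have "iter_coprod [reduced f] x = 0"
      using \<open>reduced_vanishes 1 x\<close> lin_fun_reduced[OF f] by (simp add: reduced_vanishes_def)
    then show ?thesis
      using iter_coprod_single[OF lin_fun_reduced[OF f]] reduced_eq[OF counit_x] by simp
  qed
  then show "x = 0"
    by (rule eq_0_if_lin_funs_vanish[OF vector_space_axioms])
qed

end

subsection \<open>Surjectivity\<close>

locale prim_action_coalg = pointed_coalg +
  fixes L
  assumes L_linear: "p \<in> Prim \<Longrightarrow> Vector_Spaces.linear scale scale (L p)"
    and L_e: "p \<in> Prim \<Longrightarrow> L p e = p"
    and Delta_L: "p \<in> Prim \<Longrightarrow> lin_fun scale f \<Longrightarrow> lin_fun scale g \<Longrightarrow>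
      \<Delta> (L p x) [f, g] = f (L p x) * g e + \<Delta> x [f, g \<circ> L p]"
begin

lemma iter_coprod_L:
  assumes "p \<in> Prim" "lin_fun scale g" "g e = 0"
  shows "iter_coprod (hs @ [g]) (L p y) = iter_coprod (hs @ [reduced (g \<circ> L p)]) y + g p * iter_coprod hs y"
proof -
  have gL: "lin_fun scale (g \<circ> L p)"
    using lin_fun_compose[OF assms(2) L_linear[OF assms(1)]] .
  have "iter_coprod (hs @ [g]) (L p y) = \<Delta> y [iter_coprod hs, g \<circ> L p]"
    using Delta_L[OF assms(1) lin_fun_iter_coprod assms(2)] assms(3) by simp
  also have "\<dots> = \<Delta> y [iter_coprod hs, reduced (g \<circ> L p)] + g p * iter_coprod hs y"
    using Delta_reduced_right[OF lin_fun_iter_coprod gL] L_e[OF assms(1)] by simp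
  finally show ?thesis by simp
qed

text \<open>\<open>fold L ps e = L\<^sub>p\<^sub>n (\<dots> (L\<^sub>p\<^sub>1 e))\<close> is a preimage of \<open>p\<^sub>1 \<otimes> \<dots> \<otimes> p\<^sub>n\<close> modulo lower degrees.\<close>

lemma iter_coprod_fold_L:
  assumes "set ps \<subseteq> Prim" "vanish_at_e hs" "length ps \<le> length hs"
  shows "iter_coprod hs (fold L ps e) = (if length hs = length ps then ptens scale ps hs else 0)"
  using assms
proof (induction ps arbitrary: hs rule: rev_induct)
  case Nil
  then show ?case
    by (cases "hs = []") (simp_all add: counit_e ptens_def lin_list_def iter_coprod_e)
next
  case (snoc p ps)
  then obtain gs g where hs: "hs = gs @ [g]" "length ps \<le> length gs"
    by (cases hs rule: rev_cases) auto
  with snoc.prems have gs: "vanish_at_e gs" "lin_fun scale g" "g e = 0" "p \<in> Prim" "set ps \<subseteq> Prim"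
    by auto
  have red: "vanish_at_e (gs @ [reduced (g \<circ> L p)])"
    using gs lin_fun_reduced[OF lin_fun_compose[OF gs(2) L_linear[OF gs(4)]]] by simp
  have "iter_coprod hs (fold L (ps @ [p]) e)
      = iter_coprod (gs @ [reduced (g \<circ> L p)]) (fold L ps e) + g p * iter_coprod gs (fold L ps e)"
    using iter_coprod_L[OF gs(4,2,3)] hs(1) by simp
  also have "iter_coprod (gs @ [reduced (g \<circ> L p)]) (fold L ps e) = 0"
    using snoc.IH[OF gs(5) red] hs(2) by simp
  finally show ?case
    using snoc.IH[OF gs(5) gs(1) hs(2)] hs vanish_at_e_lin_list[OF gs(1)] gs(2)
    by (auto simp: ptens_snoc mult.commute)
qed

lemma component_fold_L:
  assumes "set ps \<subseteq> Prim"
  shows "component (length ps) (fold L ps e) = ptens scale ps"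
proof
  fix fs
  show "component (length ps) (fold L ps e) fs = ptens scale ps fs"
  proof (cases "lin_list scale (length ps) fs")
    case True
    then have "component (length ps) (fold L ps e) fs = ptens scale ps (map (\<lambda>f. f \<circ> prim_proj) fs)"
      using iter_coprod_fold_L[OF assms vanish_at_e_map_prim_proj]
      by (simp add: component_def lin_list_def)
    also have "\<dots> = ptens scale (map prim_proj ps) fs"
      using True by (rule ptens_map_compose[OF _ linear_prim_proj])
    also have "map prim_proj ps = ps"
      using assms by (simp add: map_idI prim_proj_prim subset_iff)
    finally show ?thesis .
  qed (simp add: component_def ptens_eq_0)
qed

lemma component_fold_L_above:
  assumes "set ps \<subseteq> Prim" "length ps < n"
  shows "component n (fold L ps e) = (\<lambda>_. 0)"
  using assms iter_coprod_fold_L[OF assms(1) vanish_at_e_map_prim_proj]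
  by (auto simp: component_def lin_list_def fun_eq_iff)

lemma component_surj_bounded:
  assumes "\<And>n. t n \<in> tensors scale Prim n" "\<And>n. N \<le> n \<Longrightarrow> t n = (\<lambda>_. 0)"
  shows "\<exists>x. \<forall>n. component n x = t n"
  using assms
proof (induction N arbitrary: t)
  case 0
  then show ?case
    by (intro exI[of _ 0]) (auto simp: fun_eq_iff component_zero)
next
  case (Suc N)
  obtain m :: nat and c vs where tN: "t N = (\<lambda>fs. \<Sum>j<m. c j * ptens scale (vs j) fs)"
    "\<And>j. j < m \<Longrightarrow> length (vs j) = N" "\<And>j. j < m \<Longrightarrow> set (vs j) \<subseteq> Prim"
    using Suc.prems(1) by (rule tensorsE) blast
  define y where "y = (\<Sum>j<m. scale (c j) (fold L (vs j) e))"
  have y: "component n y fs = (\<Sum>j<m. c j * component n (fold L (vs j) e) fs)" for n fs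
    unfolding y_def by (rule component_sum)
  have "component N y = t N"
    using component_fold_L[OF tN(3)] tN(2) by (auto simp: y tN(1) fun_eq_iff intro!: sum.cong)
  moreover have "component n y = (\<lambda>_. 0)" if "N < n" for n
    using tN component_fold_L_above that by (auto simp: y fun_eq_iff)
  ultimately have "N \<le> n \<Longrightarrow> (\<lambda>fs. t n fs - component n y fs) = (\<lambda>_. 0)" for n
    using Suc.prems(2) by (cases "n = N") auto
  moreover have "(\<lambda>fs. t n fs - component n y fs) \<in> tensors scale Prim n" for n
    using Suc.prems(1) component_tensor by (rule tensors_diff)
  ultimately obtain x where "\<forall>n. component n x = (\<lambda>fs. t n fs - component n y fs)"
    using Suc.IH by presburger
  then have "\<forall>n. component n (x + y) = t n"
    by (simp add: fun_eq_iff component_add)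
  then show ?case ..
qed

lemma component_surj:
  assumes "\<And>n. t n \<in> tensors scale Prim n" "finite {n. t n \<noteq> (\<lambda>_. 0)}"
  shows "\<exists>x. \<forall>n. component n x = t n"
proof -
  obtain N where "\<forall>n\<in>{n. t n \<noteq> (\<lambda>_. 0)}. n < N"
    using assms(2) finite_nat_set_iff_bounded by blast
  then show ?thesis
    using component_surj_bounded[OF assms(1)] by (meson leD mem_Collect_eq)
qed

end

theorem mainTheorem11:
  fixes scale :: "'k::field \<Rightarrow> 'c::ab_group_add \<Rightarrow> 'c"
    and \<Delta> :: "'c \<Rightarrow> ('c \<Rightarrow> 'k) list \<Rightarrow> 'k"
    and \<epsilon> :: "'c \<Rightarrow> 'k"
    and e :: 'c
  assumes coalg: "coalgebra scale \<Delta> \<epsilon>"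
    and grouplike: "e \<noteq> 0" "\<Delta> e = ptens scale [e, e]"
    and Lex: "\<exists>L :: 'c \<Rightarrow> 'c \<Rightarrow> 'c.
            (\<forall>p\<in>prim scale \<Delta> e. \<forall>q\<in>prim scale \<Delta> e. L (p + q) = (\<lambda>x. L p x + L q x))
          \<and> (\<forall>p\<in>prim scale \<Delta> e. \<forall>a. L (scale a p) = (\<lambda>x. scale a (L p x)))
          \<and> (\<forall>p\<in>prim scale \<Delta> e. Vector_Spaces.linear scale scale (L p))
          \<and> (\<forall>p\<in>prim scale \<Delta> e. L p e = p)
          \<and> (\<forall>p\<in>prim scale \<Delta> e. \<forall>x f g. lin_fun scale f \<and> lin_fun scale g \<longrightarrow>
                \<Delta> (L p x) [f, g] = f (L p x) * g e + \<Delta> x [f, g \<circ> L p])"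
    and nilp: "\<forall>x. \<epsilon> x = 0 \<longrightarrow> (\<exists>n. \<forall>fs. lin_list scale (n + 2) fs \<longrightarrow> dtil_iter \<Delta> e n x fs = 0)"
  shows "\<exists>\<phi> :: nat \<Rightarrow> 'c \<Rightarrow> ('c \<Rightarrow> 'k) list \<Rightarrow> 'k.
       (\<forall>n x. \<phi> n x \<in> tensors scale (prim scale \<Delta> e) n)
     \<and> (\<forall>n x y fs. \<phi> n (x + y) fs = \<phi> n x fs + \<phi> n y fs)
     \<and> (\<forall>n a x fs. \<phi> n (scale a x) fs = a * \<phi> n x fs)
     \<and> (\<forall>x. finite {n. \<phi> n x \<noteq> (\<lambda>_. 0)})
     \<and> (\<forall>x. (\<forall>n. \<phi> n x = (\<lambda>_. 0)) \<longrightarrow> x = 0)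
     \<and> (\<forall>t. (\<forall>n. t n \<in> tensors scale (prim scale \<Delta> e) n) \<and> finite {n. t n \<noteq> (\<lambda>_. 0)}
            \<longrightarrow> (\<exists>x. \<forall>n. \<phi> n x = t n))
     \<and> (\<forall>x k m fs gs. lin_list scale k fs \<and> lin_list scale m gs \<longrightarrow>
            \<Delta> x [(\<lambda>a. \<phi> k a fs), (\<lambda>b. \<phi> m b gs)] = \<phi> (k + m) x (fs @ gs))
     \<and> (\<forall>x. \<phi> 0 x [] = \<epsilon> x)"
proof -
  obtain L :: "'c \<Rightarrow> 'c \<Rightarrow> 'c" where L:
    "\<forall>p\<in>prim scale \<Delta> e. Vector_Spaces.linear scale scale (L p)" "\<forall>p\<in>prim scale \<Delta> e. L p e = p"
    "\<forall>p\<in>prim scale \<Delta> e. \<forall>x f g. lin_fun scale f \<and> lin_fun scale g \<longrightarrow>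
       \<Delta> (L p x) [f, g] = f (L p x) * g e + \<Delta> x [f, g \<circ> L p]"
    using Lex by blast
  interpret pointed_coalg scale \<Delta> \<epsilon> e
    using coalg grouplike by (simp add: pointed_coalg_def pointed_coalg_axioms_def coalg_def)
  interpret prim_action_coalg scale \<Delta> \<epsilon> e L
    using L by (simp add: prim_action_coalg_def prim_action_coalg_axioms_def pointed_coalg_axioms)
  interpret conilpotent_coalg scale \<Delta> \<epsilon> e
    using nilp by (simp add: conilpotent_coalg_def conilpotent_coalg_axioms_def pointed_coalg_axioms)
  show ?thesis
  proof (intro exI[of _ component] conjI allI impI)
    show "\<exists>x. \<forall>n. component n x = t n"
      if "(\<forall>n. t n \<in> tensors scale Prim n) \<and> finite {n. t n \<noteq> (\<lambda>_. 0)}" for t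
      using that component_surj by blast
  qed (auto intro: component_tensor component_add component_scale component_finite component_inj
      component_Delta component_0_Nil)
qed

end
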